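(* Let $V$ be countably infinite, $\psi:K_V\to\mathbb N$ a fixed bijection, and $\sigma$ a permutation of $\mathbb N$. For $f:\mathscr{G}(V)\to\mathbb R$ and $G\in\mathscr{G}(V)\setminus\{\emptyset,K_V\}$ define the $\sigma$-twisted derivative $$f'_\sigma(G) := \lim_{G_1\to G,\ G_1\in\mathscr{G}'(V)\setminus\{G\}}\frac{f(G_1)-f(G)}{\|G_1\|_{\sigma\circ\psi,2}-\|G\|_{\sigma\circ\psi,2}}$$ (if the limit exists). (a) If $\sigma\in S_\infty$ and $f'(G)$ exists, then $f'_\sigma(G)$ exists and equals $f'(G)$. (b) If $\sigma\notin S_\infty$, $G\in\mathscr{G}'(V)$, and $f'(G)$ exists and is nonzero, then $f'_\sigma(G)$ does not exist.
   Context: $K_V$ is the set of $2$-element subsets of $V$; $\mathscr{G}(V)$ is the set of simple graphs on $V$ identified with their edge sets, with the product topology of $\{0,1\}^{K_V}$; $\mathscr{G}'(V)$ is the set of graphs $G$ with both $G$ and $K_V\setminus G$ infinite. $\mathbb N=\{1,2,\dots\}$. For a bijection $\chi:K_V\to\mathbb N$, $\|G\|_{\chi,2}:=\sum_{e\in G}2^{-\chi(e)}$. $f'(G) := f'_{\mathrm{id}}(G)$ is the derivative with respect to $\psi$, i.e. the same limit with $\|\cdot\|_{\psi,2}$ in the denominator (limits taken in the product topology). $S_\infty$ is the group of permutations of $\mathbb N$ fixing all but finitely many elements. *)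

theory Defs
  imports "HOL-Analysis.Analysis"
begin

definition Kset :: "'v set \<Rightarrow> 'v set set" where
  "Kset V = {e. \<exists>x y. x \<in> V \<and> y \<in> V \<and> x \<noteq> y \<and> e = {x, y}}"

text \<open>Simple graphs on V, identified with their edge sets.\<close>
definition graphs :: "'v set \<Rightarrow> 'v set set set" where
  "graphs V = {G. G \<subseteq> Kset V}"

definition graphs' :: "'v set \<Rightarrow> 'v set set set" where
  "graphs' V = {G. G \<subseteq> Kset V \<and> infinite G \<and> infinite (Kset V - G)}"

definition gnorm :: "('v set \<Rightarrow> nat) \<Rightarrow> 'v set set \<Rightarrow> real" where
  "gnorm chi G = infsum (\<lambda>e. (1/2::real) ^ chi e) G"

text \<open>Neighbourhood filter of G in the product topology of {0,1}^{K_V}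
  (basic open sets are cylinders fixing membership of finitely many edges),
  restricted to the set S.\<close>
definition graph_at_within :: "'v set \<Rightarrow> 'v set set \<Rightarrow> 'v set set set \<Rightarrow> 'v set set filter" where
  "graph_at_within V G S =
     inf (INF F\<in>{F. finite F \<and> F \<subseteq> Kset V}. principal {H. H \<subseteq> Kset V \<and> H \<inter> F = G \<inter> F})
     (principal S)"

definition has_gderiv :: "'v set \<Rightarrow> ('v set \<Rightarrow> nat) \<Rightarrow> ('v set set \<Rightarrow> real) \<Rightarrow> 'v set set \<Rightarrow> real \<Rightarrow> bool" where
  "has_gderiv V chi f G L \<longleftrightarrow>
     ((\<lambda>G1. (f G1 - f G) / (gnorm chi G1 - gnorm chi G)) \<longlongrightarrow> L)
       (graph_at_within V G (graphs' V - {G}))"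

definition S_inf :: "(nat \<Rightarrow> nat) set" where
  "S_inf = {\<sigma>. bij_betw \<sigma> {1..} {1..} \<and> finite {n \<in> {1..}. \<sigma> n \<noteq> n}}"

end

theory Submission
  imports Defs
begin

(* Near G, a neighbourhood may fix the membership of any finite set of edges, so changing finitely
   many of the weights 2^-psi(e) leaves the difference quotients unchanged near G: this is (a).
   For (b), flipping the single edge psi^-1(n) gives a sequence in G'(V) converging to G, along which
   the twisted difference quotient is exactly 2^(sigma n - n) times the untwisted one. If both
   derivatives existed, with f'(G) = L <> 0, then 2^(sigma n - n) would converge to M / L. A limit 0
   forces sigma n < n eventually, and a nonzero limit forces sigma n - n to be eventually constant;
   for a bijection of {1..} both are only possible if sigma moves finitely many points. *)

lemma inj_on_not_eventually_decreasing:
  fixes \<sigma> :: "nat \<Rightarrow> nat"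
  assumes inj: "inj_on \<sigma> {1..}" and into: "\<sigma> ` {1..} \<subseteq> {1..}"
  shows "\<not> (\<forall>n\<ge>N. \<sigma> n < n)"
proof
  assume dec: "\<forall>n\<ge>N. \<sigma> n < n"
  define K where "K = N + (\<Sum>n<N. \<sigma> n) + 1"
  have "\<sigma> ` {1..K} \<subseteq> {1..<K}"
  proof
    fix x assume "x \<in> \<sigma> ` {1..K}"
    then obtain n where n: "n \<in> {1..K}" "x = \<sigma> n" by blast
    have "\<sigma> n < K"
    proof (cases "n \<ge> N")
      case True
      then have "\<sigma> n < n" using dec by blast
      then show ?thesis using n(1) by simp
    next
      case False
      then have "\<sigma> n \<le> (\<Sum>n<N. \<sigma> n)" by (intro member_le_sum) auto
      then show ?thesis unfolding K_def by simp
    qed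
    moreover have "\<sigma> n \<ge> 1" using into n(1) by auto
    ultimately show "x \<in> {1..<K}" using n(2) by simp
  qed
  then have "card (\<sigma> ` {1..K}) \<le> card {1..<K}" by (rule card_mono[rotated]) simp
  moreover have "card (\<sigma> ` {1..K}) = card {1..K}"
    by (rule card_image, rule inj_on_subset[OF inj]) auto
  ultimately show False using K_def by simp
qed

lemma surj_on_not_eventually_increasing:
  fixes \<sigma> :: "nat \<Rightarrow> nat"
  assumes onto: "{1..} \<subseteq> \<sigma> ` {1..}"
  shows "\<not> (\<forall>n\<ge>N. n < \<sigma> n)"
proof
  assume inc: "\<forall>n\<ge>N. n < \<sigma> n"
  have "{1..Suc N} \<subseteq> \<sigma> ` {1..N}"
  proof
    fix m assume m: "m \<in> {1..Suc N}"
    then have "m \<in> \<sigma> ` {1..}" using onto by auto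
    then obtain p where p: "p \<ge> 1" "m = \<sigma> p" by auto
    have "p \<le> N"
    proof (rule ccontr)
      assume "\<not> p \<le> N"
      then have "p < \<sigma> p" "Suc N \<le> p" using inc by auto
      moreover have "\<sigma> p \<le> Suc N" using m p(2) by simp
      ultimately show False by linarith
    qed
    then show "m \<in> \<sigma> ` {1..N}" using p by auto
  qed
  then have "card {1..Suc N} \<le> card (\<sigma> ` {1..N})" by (rule card_mono[rotated]) simp
  moreover have "card (\<sigma> ` {1..N}) \<le> card {1..N}" by (rule card_image_le) simp
  ultimately show False by simp
qed

lemma bij_eventually_const_displacement_imp_S_inf:
  fixes \<sigma> :: "nat \<Rightarrow> nat"
  assumes bij: "bij_betw \<sigma> {1..} {1..}" and const: "\<forall>n\<ge>N. int (\<sigma> n) - int n = d"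
  shows "\<sigma> \<in> S_inf"
proof -
  have "d = 0"
  proof (rule ccontr)
    assume "d \<noteq> 0"
    then consider "d < 0" | "d > 0" by linarith
    then show False
    proof cases
      case 1
      then have "\<forall>n\<ge>N. \<sigma> n < n" using const by force
      then show False
        using inj_on_not_eventually_decreasing bij unfolding bij_betw_def by blast
    next
      case 2
      then have "\<forall>n\<ge>N. n < \<sigma> n" using const by force
      then show False
        using surj_on_not_eventually_increasing bij unfolding bij_betw_def by blast
    qed
  qed
  then have "{n \<in> {1..}. \<sigma> n \<noteq> n} \<subseteq> {..<N}" using const by (auto simp: not_less[symmetric])
  then show ?thesis using bij finite_subset unfolding S_inf_def by blast
qed

lemma eventually_graph_at_within:
  "eventually P (graph_at_within V G S) \<longleftrightarrow>
     (\<exists>F. finite F \<and> F \<subseteq> Kset V \<and>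
        (\<forall>H. H \<subseteq> Kset V \<longrightarrow> H \<inter> F = G \<inter> F \<longrightarrow> H \<in> S \<longrightarrow> P H))"
proof -
  let ?B = "{F. finite F \<and> F \<subseteq> Kset V}"
  let ?cyl = "\<lambda>F. principal {H. H \<subseteq> Kset V \<and> H \<inter> F = G \<inter> F}"
  have base: "eventually Q (INF F\<in>?B. ?cyl F) \<longleftrightarrow> (\<exists>F\<in>?B. eventually Q (?cyl F))" for Q
  proof (rule eventually_INF_base)
    show "?B \<noteq> {}" by blast
    fix F F' assume "F \<in> ?B" "F' \<in> ?B"
    then show "\<exists>F''\<in>?B. ?cyl F'' \<le> inf (?cyl F) (?cyl F')"
      by (intro bexI[of _ "F \<union> F'"]) auto
  qed
  let ?Q = "\<lambda>H. H \<in> S \<longrightarrow> P H"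
  have "eventually P (graph_at_within V G S) \<longleftrightarrow> eventually ?Q (INF F\<in>?B. ?cyl F)"
    unfolding graph_at_within_def eventually_inf_principal ..
  also have "\<dots> \<longleftrightarrow> (\<exists>F\<in>?B. eventually ?Q (?cyl F))" by (rule base)
  also have "\<dots> \<longleftrightarrow> (\<exists>F. finite F \<and> F \<subseteq> Kset V \<and>
        (\<forall>H. H \<subseteq> Kset V \<longrightarrow> H \<inter> F = G \<inter> F \<longrightarrow> H \<in> S \<longrightarrow> P H))"
    unfolding eventually_principal by (simp add: Ball_def imp_conjL)
  finally show ?thesis .
qed

lemma summable_on_half_power:
  assumes "inj_on (\<kappa> :: 'a \<Rightarrow> nat) A"
  shows "(\<lambda>e. (1/2::real) ^ \<kappa> e) summable_on A"
proof -
  have "(\<lambda>n::nat. (1/2::real) ^ n) summable_on UNIV"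
    by (rule summable_nonneg_imp_summable_on) (auto intro: summable_geometric)
  then have "(\<lambda>n::nat. (1/2::real) ^ n) summable_on \<kappa> ` A"
    using summable_on_subset_banach by blast
  then have "(\<lambda>n::nat. (1/2::real) ^ n) \<circ> \<kappa> summable_on A"
    using summable_on_reindex[OF assms] by blast
  then show ?thesis by (simp add: o_def)
qed

definition flip :: "'a \<Rightarrow> 'a set \<Rightarrow> 'a set" where
  "flip e G = (if e \<in> G then G - {e} else insert e G)"

lemma gnorm_flip:
  assumes "inj_on \<kappa> A" "G \<subseteq> A" "e \<in> A"
  shows "gnorm \<kappa> (flip e G) - gnorm \<kappa> G = (if e \<in> G then -1 else 1) * (1/2) ^ \<kappa> e"
proof (cases "e \<in> G")
  case True
  have "(\<lambda>e. (1/2::real) ^ \<kappa> e) summable_on (G - {e})"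
    using summable_on_half_power[OF assms(1)] summable_on_subset_banach assms by blast
  from infsum_insert[OF this, of e] True show ?thesis
    unfolding flip_def gnorm_def by (simp add: insert_absorb)
next
  case False
  have "(\<lambda>e. (1/2::real) ^ \<kappa> e) summable_on G"
    using summable_on_half_power[OF assms(1)] summable_on_subset_banach assms by blast
  from infsum_insert[OF this False] False show ?thesis
    unfolding flip_def gnorm_def by simp
qed

lemma flip_in_graphs':
  assumes "G \<in> graphs' V" "e \<in> Kset V"
  shows "flip e G \<in> graphs' V - {G}"
proof -
  have G: "G \<subseteq> Kset V" "infinite G" "infinite (Kset V - G)"
    using assms(1) unfolding graphs'_def by auto
  have "Kset V - G - {e} \<subseteq> Kset V - flip e G" unfolding flip_def by auto
  moreover have "infinite (Kset V - G - {e})" using G(3) by simp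
  ultimately have "infinite (Kset V - flip e G)" using infinite_super by blast
  moreover have "infinite (flip e G)" "flip e G \<subseteq> Kset V" "flip e G \<noteq> G"
    using G(1,2) assms(2) unfolding flip_def by auto
  ultimately show ?thesis unfolding graphs'_def by auto
qed

lemma filterlim_flip_enumeration:
  assumes \<psi>: "bij_betw \<psi> (Kset V) {1..}" and G: "G \<in> graphs' V"
  shows "filterlim (\<lambda>n. flip (inv_into (Kset V) \<psi> n) G)
           (graph_at_within V G (graphs' V - {G})) sequentially"
  unfolding filterlim_iff
proof (intro allI impI)
  fix P assume "eventually P (graph_at_within V G (graphs' V - {G}))"
  then obtain F where F: "finite F"
    and P: "\<And>H. H \<subseteq> Kset V \<Longrightarrow> H \<inter> F = G \<inter> F \<Longrightarrow> H \<in> graphs' V - {G} \<Longrightarrow> P H"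
    unfolding eventually_graph_at_within by blast
  show "eventually (\<lambda>n. P (flip (inv_into (Kset V) \<psi> n) G)) sequentially"
  proof (rule eventually_sequentiallyI)
    fix n assume n: "Suc (\<Sum>e\<in>F. \<psi> e) \<le> n"
    define e where "e = inv_into (Kset V) \<psi> n"
    have n1: "n \<in> {1..}" using n by simp
    have e: "e \<in> Kset V" "\<psi> e = n"
      using \<psi> n1 unfolding e_def bij_betw_def by (metis inv_into_into, metis f_inv_into_f)
    have "e \<notin> F"
    proof
      assume "e \<in> F"
      then have "\<psi> e \<le> (\<Sum>e\<in>F. \<psi> e)" using F by (intro member_le_sum) auto
      then show False using e n by simp
    qed
    then have "flip e G \<inter> F = G \<inter> F" unfolding flip_def by auto
    moreover have "flip e G \<in> graphs' V - {G}" using flip_in_graphs'[OF G e(1)] .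
    ultimately show "P (flip e G)" using P unfolding graphs'_def by blast
  qed
qed

lemma gnorm_diff_eq_off_finite:
  assumes inj: "inj_on \<kappa> A" "inj_on \<kappa>' A" and E: "finite E"
    and agree: "\<And>e. e \<in> A - E \<Longrightarrow> \<kappa>' e = \<kappa> e"
    and H: "H \<subseteq> A" and G: "G \<subseteq> A" and HG: "H \<inter> E = G \<inter> E"
  shows "gnorm \<kappa>' H - gnorm \<kappa>' G = gnorm \<kappa> H - gnorm \<kappa> G"
proof -
  define d where "d e = (1/2::real) ^ \<kappa>' e - (1/2) ^ \<kappa> e" for e
  have split: "gnorm \<kappa>' K = gnorm \<kappa> K + sum d (K \<inter> E)" if K: "K \<subseteq> A" for K
  proof -
    have s: "(\<lambda>e. (1/2::real) ^ \<kappa> e) summable_on K" "(\<lambda>e. (1/2::real) ^ \<kappa>' e) summable_on K"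
      using summable_on_half_power[OF inj(1)] summable_on_half_power[OF inj(2)]
        summable_on_subset_banach K by blast+
    have sd: "d summable_on K"
      using summable_on_add[OF s(2) summable_on_uminus[THEN iffD2, OF s(1)]] unfolding d_def by simp
    have "gnorm \<kappa>' K = infsum (\<lambda>e. (1/2) ^ \<kappa> e + d e) K" unfolding gnorm_def d_def by simp
    also have "\<dots> = gnorm \<kappa> K + infsum d K" unfolding gnorm_def by (rule infsum_add[OF s(1) sd])
    also have "infsum d K = infsum d (K \<inter> E)"
      by (rule infsum_cong_neutral) (use K agree in \<open>auto simp: d_def\<close>)
    also have "\<dots> = sum d (K \<inter> E)" using E by simp
    finally show ?thesis .
  qed
  show ?thesis using split[OF H] split[OF G] HG by simp
qed

lemma has_gderiv_cong_off_finite: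
  assumes inj: "inj_on \<kappa> (Kset V)" "inj_on \<kappa>' (Kset V)"
    and fin: "finite {e \<in> Kset V. \<kappa>' e \<noteq> \<kappa> e}" and G: "G \<subseteq> Kset V"
  shows "has_gderiv V \<kappa>' f G L \<longleftrightarrow> has_gderiv V \<kappa> f G L"
  unfolding has_gderiv_def
proof (rule tendsto_cong)
  let ?E = "{e \<in> Kset V. \<kappa>' e \<noteq> \<kappa> e}"
  show "eventually (\<lambda>H. (f H - f G) / (gnorm \<kappa>' H - gnorm \<kappa>' G)
      = (f H - f G) / (gnorm \<kappa> H - gnorm \<kappa> G)) (graph_at_within V G (graphs' V - {G}))"
    unfolding eventually_graph_at_within
  proof (intro exI conjI allI impI)
    show "finite ?E" "?E \<subseteq> Kset V" using fin by auto
    fix H assume "H \<subseteq> Kset V" "H \<inter> ?E = G \<inter> ?E"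
    then have "gnorm \<kappa>' H - gnorm \<kappa>' G = gnorm \<kappa> H - gnorm \<kappa> G"
      by (intro gnorm_diff_eq_off_finite[OF inj fin _ _ G]) auto
    then show "(f H - f G) / (gnorm \<kappa>' H - gnorm \<kappa>' G) = (f H - f G) / (gnorm \<kappa> H - gnorm \<kappa> G)"
      by simp
  qed
qed

lemma finite_moved_by_S_inf:
  assumes "\<sigma> \<in> S_inf" "inj_on \<psi> A" "\<psi> ` A \<subseteq> {1..}"
  shows "finite {a \<in> A. \<sigma> (\<psi> a) \<noteq> \<psi> a}"
proof -
  have "\<psi> ` {a \<in> A. \<sigma> (\<psi> a) \<noteq> \<psi> a} \<subseteq> {n \<in> {1..}. \<sigma> n \<noteq> n}" using assms(3) by auto
  moreover have "finite {n \<in> {1..}. \<sigma> n \<noteq> n}" using assms(1) unfolding S_inf_def by blast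
  ultimately have "finite (\<psi> ` {a \<in> A. \<sigma> (\<psi> a) \<noteq> \<psi> a})" by (rule finite_subset)
  then show ?thesis by (rule finite_imageD) (rule inj_on_subset[OF assms(2)], blast)
qed

lemma int_convergent_imp_eventually_const:
  fixes k :: "nat \<Rightarrow> int"
  assumes "(\<lambda>n. real_of_int (k n)) \<longlonglongrightarrow> l"
  shows "\<exists>N. \<forall>n\<ge>N. k n = k N"
proof -
  obtain N where N: "\<And>n. n \<ge> N \<Longrightarrow> dist (real_of_int (k n)) l < 1/2"
    using assms unfolding lim_sequentially by (meson half_gt_zero zero_less_one)
  have "k n = k N" if "n \<ge> N" for n
  proof -
    have "dist (real_of_int (k n)) (real_of_int (k N)) < 1"
      using dist_triangle2[of "real_of_int (k n)" "real_of_int (k N)" l] N[OF that] N[of N]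
      by linarith
    then have "\<bar>k n - k N\<bar> < 1"
      unfolding dist_real_def by (metis of_int_abs of_int_diff of_int_less_1_iff)
    then show ?thesis by simp
  qed
  then show ?thesis by blast
qed

lemma powr_int_convergent_imp_eventually_const:
  fixes k :: "nat \<Rightarrow> int" and b c :: real
  assumes b: "b > 1" and lim: "(\<lambda>n. b powr of_int (k n)) \<longlonglongrightarrow> c" and "c \<noteq> 0"
  shows "\<exists>N. \<forall>n\<ge>N. k n = k N"
proof (rule int_convergent_imp_eventually_const)
  have "(\<lambda>n. ln (b powr of_int (k n)) / ln b) \<longlonglongrightarrow> ln c / ln b"
    using lim \<open>c \<noteq> 0\<close> b by (intro tendsto_divide tendsto_ln) auto
  moreover have "ln (b powr of_int (k n)) / ln b = of_int (k n)" for n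
    using b by (simp add: ln_powr)
  ultimately show "(\<lambda>n. real_of_int (k n)) \<longlonglongrightarrow> ln c / ln b" by simp
qed

lemma difference_quotient_flip:
  assumes "inj_on \<kappa> A" "inj_on \<kappa>' A" "G \<subseteq> A" "e \<in> A"
  shows "(f (flip e G) - f G) / (gnorm \<kappa>' (flip e G) - gnorm \<kappa>' G)
       = (f (flip e G) - f G) / (gnorm \<kappa> (flip e G) - gnorm \<kappa> G)
           * 2 powr (real (\<kappa>' e) - real (\<kappa> e))"
proof -
  have "2 powr (real (\<kappa>' e) - real (\<kappa> e)) = 2 ^ \<kappa>' e / 2 ^ \<kappa> e"
    by (simp add: powr_diff powr_realpow)
  then show ?thesis
    unfolding gnorm_flip[OF assms(1,3,4)] gnorm_flip[OF assms(2,3,4)]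
    by (simp add: power_one_over field_simps)
qed

lemma displacement_factor_tendsto:
  assumes \<psi>: "bij_betw \<psi> (Kset V) {1..}" and \<sigma>: "inj_on \<sigma> {1..}" and G: "G \<in> graphs' V"
    and L: "has_gderiv V \<psi> f G L" "L \<noteq> 0" and M: "has_gderiv V (\<sigma> \<circ> \<psi>) f G M"
  shows "(\<lambda>n. (2::real) powr of_int (int (\<sigma> n) - int n)) \<longlonglongrightarrow> M / L"
proof -
  define e where "e n = inv_into (Kset V) \<psi> n" for n
  define q where "q \<kappa> n = (f (flip (e n) G) - f G) / (gnorm \<kappa> (flip (e n) G) - gnorm \<kappa> G)"
    for \<kappa> n
  have GK: "G \<subseteq> Kset V" using G unfolding graphs'_def by blast
  have inj: "inj_on \<psi> (Kset V)" "inj_on (\<sigma> \<circ> \<psi>) (Kset V)"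
    using \<psi> \<sigma> unfolding bij_betw_def by (blast, metis comp_inj_on)
  have lim: "q \<kappa> \<longlonglongrightarrow> D" if "has_gderiv V \<kappa> f G D" for \<kappa> D
    using filterlim_compose[OF that[unfolded has_gderiv_def] filterlim_flip_enumeration[OF \<psi> G]]
    unfolding q_def e_def .
  have ratio: "q (\<sigma> \<circ> \<psi>) n = q \<psi> n * 2 powr of_int (int (\<sigma> n) - int n)" if "n \<ge> 1" for n
  proof -
    have "e n \<in> Kset V" "\<psi> (e n) = n"
      using \<psi> that unfolding e_def bij_betw_def
      by (metis atLeast_iff inv_into_into, metis atLeast_iff f_inv_into_f)
    then show ?thesis
      unfolding q_def using difference_quotient_flip[OF inj GK] by simp
  qed
  have "eventually (\<lambda>n. q \<psi> n \<noteq> 0) sequentially"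
    using tendsto_imp_eventually_ne[OF lim[OF L(1)] L(2)] .
  then have "eventually (\<lambda>n. q (\<sigma> \<circ> \<psi>) n / q \<psi> n = 2 powr of_int (int (\<sigma> n) - int n))
      sequentially"
    using eventually_ge_at_top[of 1] by eventually_elim (simp add: ratio)
  with tendsto_divide[OF lim[OF M] lim[OF L(1)] L(2)] show ?thesis
    by (rule Lim_transform_eventually)
qed

lemma not_has_gderiv_twisted:
  assumes \<psi>: "bij_betw \<psi> (Kset V) {1..}" and \<sigma>: "bij_betw \<sigma> {1..} {1..}"
    and not_fin: "\<sigma> \<notin> S_inf" and G: "G \<in> graphs' V"
    and L: "has_gderiv V \<psi> f G L" "L \<noteq> 0"
  shows "\<not> has_gderiv V (\<sigma> \<circ> \<psi>) f G M"
proof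
  assume "has_gderiv V (\<sigma> \<circ> \<psi>) f G M"
  with \<sigma> have lim: "(\<lambda>n. (2::real) powr of_int (int (\<sigma> n) - int n)) \<longlonglongrightarrow> M / L"
    unfolding bij_betw_def by (intro displacement_factor_tendsto[OF \<psi> _ G L]) auto
  show False
  proof (cases "M = 0")
    case True
    then have "eventually (\<lambda>n. (2::real) powr of_int (int (\<sigma> n) - int n) < 1) sequentially"
      using lim by (intro order_tendstoD(2)) auto
    then obtain N where "\<forall>n\<ge>N. (2::real) powr of_int (int (\<sigma> n) - int n) < 1"
      unfolding eventually_sequentially by blast
    then have "\<forall>n\<ge>N. \<sigma> n < n"
      by (metis ge_one_powr_ge_zero not_less of_int_nonneg one_le_numeral diff_ge_0_iff_ge
          of_nat_le_iff)
    then show False using inj_on_not_eventually_decreasing \<sigma> unfolding bij_betw_def by blast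
  next
    case False
    have "\<exists>N. \<forall>n\<ge>N. int (\<sigma> n) - int n = int (\<sigma> N) - int N"
      by (rule powr_int_convergent_imp_eventually_const[OF _ lim]) (use False L(2) in simp_all)
    then obtain N where "\<forall>n\<ge>N. int (\<sigma> n) - int n = int (\<sigma> N) - int N" by blast
    then have "\<sigma> \<in> S_inf" by (rule bij_eventually_const_displacement_imp_S_inf[OF \<sigma>])
    with not_fin show False by contradiction
  qed
qed

theorem theorem3p10:
  fixes V :: "'v set" and \<psi> :: "'v set \<Rightarrow> nat" and \<sigma> :: "nat \<Rightarrow> nat"
    and f :: "'v set set \<Rightarrow> real" and G :: "'v set set"
  assumes "countable V" and "infinite V"
    and "bij_betw \<psi> (Kset V) {1..}"
    and "bij_betw \<sigma> {1..} {1..}"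
    and "G \<in> graphs V" and "G \<noteq> {}" and "G \<noteq> Kset V"
  shows "(\<sigma> \<in> S_inf \<longrightarrow>
           (\<forall>L. has_gderiv V \<psi> f G L \<longrightarrow> has_gderiv V (\<sigma> \<circ> \<psi>) f G L))
       \<and> (\<sigma> \<notin> S_inf \<and> G \<in> graphs' V \<longrightarrow>
           (\<forall>L. has_gderiv V \<psi> f G L \<and> L \<noteq> 0 \<longrightarrow> \<not> (\<exists>M. has_gderiv V (\<sigma> \<circ> \<psi>) f G M)))"
proof (intro conjI impI allI)
  have inj: "inj_on \<psi> (Kset V)" "inj_on (\<sigma> \<circ> \<psi>) (Kset V)"
    using assms(3,4) unfolding bij_betw_def by (blast, metis comp_inj_on)
  fix L assume "\<sigma> \<in> S_inf" and "has_gderiv V \<psi> f G L"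
  moreover have "finite {e \<in> Kset V. (\<sigma> \<circ> \<psi>) e \<noteq> \<psi> e}"
    using finite_moved_by_S_inf[OF \<open>\<sigma> \<in> S_inf\<close> inj(1)] assms(3)
    unfolding bij_betw_def by simp
  ultimately show "has_gderiv V (\<sigma> \<circ> \<psi>) f G L"
    using has_gderiv_cong_off_finite[OF inj] assms(5) unfolding graphs_def by blast
next
  fix L assume "\<sigma> \<notin> S_inf \<and> G \<in> graphs' V" and "has_gderiv V \<psi> f G L \<and> L \<noteq> 0"
  then show "\<not> (\<exists>M. has_gderiv V (\<sigma> \<circ> \<psi>) f G M)"
    using not_has_gderiv_twisted[OF assms(3,4)] by blast
qed

end
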